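(* Let $a,b$ be positive integers and let $k$ be an integer with $1\leq k\leq a+b$. Then $$\psi_k(K_{a,b})=\begin{cases}a+b & \text{if } k=1,\\ \min\{a,b\}-\left\lfloor \frac{k}{2}\right\rfloor+1 & \text{if } 1<k\leq 2\min\{a,b\}+1,\\ 0 & \text{otherwise.}\end{cases}$$
   Context: All graphs are finite, simple and nonempty. For a graph $G$ and a positive integer $k$, a $k$-path vertex cover ($k$-PVC) of $G$ is a set $S$ of vertices such that every path on $k$ vertices in $G$ contains at least one vertex of $S$ (if $G$ has no path on $k$ vertices, the empty set is a $k$-PVC). $\psi_k(G)$ denotes the minimum cardinality of a $k$-PVC of $G$. $K_{a,b}$ is the complete bipartite graph with parts of sizes $a$ and $b$. *)

theory Defs
  imports Main
begin

definition simple_graph :: "'a set \<Rightarrow> ('a \<Rightarrow> 'a \<Rightarrow> bool) \<Rightarrow> bool" where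
  "simple_graph V E \<longleftrightarrow> finite V \<and> V \<noteq> {} \<and>
     (\<forall>x\<in>V. \<forall>y\<in>V. E x y \<longrightarrow> E y x) \<and> (\<forall>x\<in>V. \<not> E x x)"

definition is_path :: "'a set \<Rightarrow> ('a \<Rightarrow> 'a \<Rightarrow> bool) \<Rightarrow> 'a list \<Rightarrow> bool" where
  "is_path V E p \<longleftrightarrow> p \<noteq> [] \<and> set p \<subseteq> V \<and> distinct p \<and>
     (\<forall>i. Suc i < length p \<longrightarrow> E (p ! i) (p ! Suc i))"

definition is_kpvc :: "'a set \<Rightarrow> ('a \<Rightarrow> 'a \<Rightarrow> bool) \<Rightarrow> nat \<Rightarrow> 'a set \<Rightarrow> bool" where
  "is_kpvc V E k S \<longleftrightarrow> S \<subseteq> V \<and>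
     (\<forall>p. is_path V E p \<and> length p = k \<longrightarrow> set p \<inter> S \<noteq> {})"

definition psi :: "'a set \<Rightarrow> ('a \<Rightarrow> 'a \<Rightarrow> bool) \<Rightarrow> nat \<Rightarrow> nat" where
  "psi V E k = Min (card ` {S. is_kpvc V E k S})"

definition Kab_V :: "nat \<Rightarrow> nat \<Rightarrow> (nat + nat) set" where
  "Kab_V a b = Inl ` {..<a} \<union> Inr ` {..<b}"

definition Kab_E :: "(nat + nat) \<Rightarrow> (nat + nat) \<Rightarrow> bool" where
  "Kab_E x y \<longleftrightarrow> isl x \<noteq> isl y"

end

theory Submission imports Defs begin

text \<open>Removing a vertex set S from K_{a,b} leaves a complete bipartite graph with
  sides of sizes l and r, whose longest path has min (l + r) (2 min l r + 1) vertices,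
  because paths alternate between the sides. So S is a k-PVC iff this number is below k,
  and psi_k is the least |S| achieving that: for 1 < k the best choice removes
  min a b - k div 2 + 1 vertices from the smaller side.\<close>

lemma is_path_iff_successively:
  "is_path V E p \<longleftrightarrow> p \<noteq> [] \<and> set p \<subseteq> V \<and> distinct p \<and> successively E p"
  by (simp add: is_path_def successively_conv_nth)

lemma is_path_Diff:
  "is_path (V - S) E p \<longleftrightarrow> is_path V E p \<and> set p \<inter> S = {}"
  by (auto simp: is_path_def)

lemma psi_eqI:
  assumes "finite V" "is_kpvc V E k S\<^sub>0"
    and "\<And>S. is_kpvc V E k S \<Longrightarrow> card S\<^sub>0 \<le> card S"
  shows "psi V E k = card S\<^sub>0"
  unfolding psi_def
proof (rule Min_eqI)
  have "{S. is_kpvc V E k S} \<subseteq> Pow V"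
    by (auto simp: is_kpvc_def)
  then show "finite (card ` {S. is_kpvc V E k S})"
    using assms(1) finite_subset by blast
  show "card S\<^sub>0 \<in> card ` {S. is_kpvc V E k S}"
    using assms(2) by blast
qed (use assms(3) in blast)

lemma exists_distinct_list_of_length:
  assumes "n \<le> card A"
  shows "\<exists>xs. distinct xs \<and> set xs \<subseteq> A \<and> length xs = n"
proof -
  obtain T where T: "T \<subseteq> A" "card T = n" "finite T"
    using obtain_subset_with_card_n[OF assms] by blast
  obtain xs where xs: "set xs = T" "distinct xs"
    using finite_distinct_list[OF \<open>finite T\<close>] by blast
  then have "length xs = n"
    using T(2) distinct_card by metis
  with xs T(1) show ?thesis
    by blast
qed

lemma alternating_length_le:
  "successively (\<lambda>u v. isl u \<noteq> isl v) xs \<Longrightarrow>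
   length xs \<le> 2 * min (length (filter isl xs)) (length (filter (\<lambda>x. \<not> isl x) xs)) + 1"
  by (induction xs rule: induct_list012) (auto simp: successively_Cons)

lemma successively_splice:
  assumes "\<And>x y. x \<in> set xs \<Longrightarrow> y \<in> set ys \<Longrightarrow> E x y \<and> E y x"
    and "length ys \<le> length xs" "length xs \<le> Suc (length ys)"
  shows "successively E (splice xs ys)"
  using assms
proof (induction xs ys rule: splice.induct)
  case (2 x xs ys)
  then have "successively E (splice ys xs)"
    by simp
  with "2.prems" show ?case
    by (cases ys) (auto simp: successively_Cons)
qed simp

text \<open>The path starts on the larger side A with k - k div 2 vertices and uses
  k div 2 vertices of B.\<close>

lemma bipartite_path_exists:
  assumes "A \<inter> B = {}" "\<And>x y. x \<in> A \<Longrightarrow> y \<in> B \<Longrightarrow> E x y \<and> E y x"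
    and "card B \<le> card A" "k \<le> card A + card B" "k \<le> 2 * card B + 1"
  shows "\<exists>p. distinct p \<and> set p \<subseteq> A \<union> B \<and> length p = k \<and> successively E p"
proof -
  have "k - k div 2 \<le> card A" "k div 2 \<le> card B"
    using assms(3-5) by linarith+
  then obtain xs ys where
    xs: "distinct xs" "set xs \<subseteq> A" "length xs = k - k div 2" and
    ys: "distinct ys" "set ys \<subseteq> B" "length ys = k div 2"
    by (meson exists_distinct_list_of_length)
  have "set xs \<inter> set ys = {}"
    using xs(2) ys(2) assms(1) by blast
  then have "distinct (splice xs ys)"
    by (rule distinct_disjoint_shuffles[OF xs(1) ys(1) _ splice_in_shuffles])
  moreover have "set (splice xs ys) \<subseteq> A \<union> B"
    using set_shuffles[OF splice_in_shuffles, of xs ys] xs(2) ys(2) by auto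
  moreover have "length ys \<le> length xs" "length xs \<le> Suc (length ys)"
    using xs(3) ys(3) by linarith+
  then have "successively E (splice xs ys)"
    by (rule successively_splice[rotated]) (use xs(2) ys(2) assms(2) in blast)
  moreover have "length (splice xs ys) = k"
    using xs(3) ys(3) by simp
  ultimately show ?thesis
    by blast
qed

text \<open>The number of vertices of a longest path in the complete bipartite graph that
  Kab_E induces on W.\<close>

definition max_path_Kab :: "('a + 'b) set \<Rightarrow> nat" where
  "max_path_Kab W =
     min (card W) (2 * min (card {x \<in> W. isl x}) (card {x \<in> W. \<not> isl x}) + 1)"

lemma card_isl_partition:
  assumes "finite W"
  shows "card W = card {x \<in> W. isl x} + card {x \<in> W. \<not> isl x}"
proof -
  have "W = {x \<in> W. isl x} \<union> {x \<in> W. \<not> isl x}"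
    by blast
  then show ?thesis
    using assms by (metis (no_types, lifting) card_Un_disjoint disjoint_iff finite_Un mem_Collect_eq)
qed

lemma length_filter_le_card:
  assumes "finite W" "distinct p" "set p \<subseteq> W"
  shows "length (filter P p) \<le> card {x \<in> W. P x}"
proof -
  have "length (filter P p) = card (set (filter P p))"
    using assms(2) by (metis distinct_card distinct_filter)
  also have "\<dots> \<le> card {x \<in> W. P x}"
    using assms(1,3) by (intro card_mono) auto
  finally show ?thesis .
qed

lemma Kab_path_length_le:
  assumes "finite W" "is_path W Kab_E p"
  shows "length p \<le> max_path_Kab W"
proof -
  have p: "distinct p" "set p \<subseteq> W" "successively (\<lambda>u v. isl u \<noteq> isl v) p"
    using assms(2) by (auto simp: is_path_iff_successively Kab_E_def[abs_def])
  have "length p \<le> card W"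
    using p assms(1) by (metis card_mono distinct_card)
  moreover have "min (length (filter isl p)) (length (filter (\<lambda>x. \<not> isl x) p))
      \<le> min (card {x \<in> W. isl x}) (card {x \<in> W. \<not> isl x})"
    by (intro min.mono length_filter_le_card[OF assms(1) p(1,2)])
  then have "length p \<le> 2 * min (card {x \<in> W. isl x}) (card {x \<in> W. \<not> isl x}) + 1"
    using alternating_length_le[OF p(3)] by linarith
  ultimately show ?thesis
    by (simp add: max_path_Kab_def)
qed

lemma Kab_path_exists:
  assumes "finite W" "0 < k" "k \<le> max_path_Kab W"
  shows "\<exists>p. is_path W Kab_E p \<and> length p = k"
proof -
  define L R where "L = {x \<in> W. isl x}" and "R = {x \<in> W. \<not> isl x}"
  have k: "k \<le> card L + card R" "k \<le> 2 * min (card L) (card R) + 1"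
    using assms(3) card_isl_partition[OF assms(1)] by (auto simp: max_path_Kab_def L_def R_def)
  have "\<exists>p. distinct p \<and> set p \<subseteq> L \<union> R \<and> length p = k \<and> successively Kab_E p"
  proof (cases "card R \<le> card L")
    case True
    then show ?thesis
      using k by (intro bipartite_path_exists) (auto simp: L_def R_def Kab_E_def)
  next
    case False
    then show ?thesis
      using k by (subst Un_commute, intro bipartite_path_exists) (auto simp: L_def R_def Kab_E_def)
  qed
  moreover have "L \<union> R = W"
    by (auto simp: L_def R_def)
  ultimately show ?thesis
    using assms(2) by (auto simp: is_path_iff_successively)
qed

lemma is_kpvc_Kab_E_iff:
  assumes "finite V" "0 < k"
  shows "is_kpvc V Kab_E k S \<longleftrightarrow> S \<subseteq> V \<and> max_path_Kab (V - S) < k"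
proof
  assume S: "is_kpvc V Kab_E k S"
  have "\<not> k \<le> max_path_Kab (V - S)"
  proof
    assume "k \<le> max_path_Kab (V - S)"
    then obtain p where "is_path (V - S) Kab_E p" "length p = k"
      using Kab_path_exists assms by blast
    then show False
      using S by (auto simp: is_kpvc_def is_path_Diff)
  qed
  then show "S \<subseteq> V \<and> max_path_Kab (V - S) < k"
    using S by (simp add: is_kpvc_def)
next
  assume S: "S \<subseteq> V \<and> max_path_Kab (V - S) < k"
  have "set p \<inter> S \<noteq> {}" if "is_path V Kab_E p" "length p = k" for p
    using Kab_path_length_le[of "V - S" p] S that assms(1) by (auto simp: is_path_Diff)
  then show "is_kpvc V Kab_E k S"
    using S by (auto simp: is_kpvc_def)
qed

lemma max_path_Kab_Diff_side_le:
  assumes "finite V" "S \<subseteq> A" "A = {x \<in> V. isl x} \<or> A = {x \<in> V. \<not> isl x}"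
  shows "max_path_Kab (V - S) \<le> 2 * (card A - card S) + 1"
proof -
  have "finite S"
    using finite_subset[OF assms(2)] assms(1,3) by auto
  have "{x \<in> V - S. isl x} = A - S \<or> {x \<in> V - S. \<not> isl x} = A - S"
    using assms(3) by blast
  then have "min (card {x \<in> V - S. isl x}) (card {x \<in> V - S. \<not> isl x}) \<le> card (A - S)"
    by (elim disjE) simp_all
  also have "\<dots> = card A - card S"
    using assms(2) \<open>finite S\<close> by (simp add: card_Diff_subset)
  finally show ?thesis
    by (simp add: max_path_Kab_def)
qed

lemma finite_Kab_V [simp]: "finite (Kab_V a b)"
  by (simp add: Kab_V_def)

lemma Kab_V_isl: "{x \<in> Kab_V a b. isl x} = Inl ` {..<a}"
  and Kab_V_not_isl: "{x \<in> Kab_V a b. \<not> isl x} = Inr ` {..<b}"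
  by (auto simp: Kab_V_def)

lemma card_Kab_V_sides: "card (Inl ` {..<a}) = a" "card (Inr ` {..<b}) = b"
  by (simp_all add: card_image)

lemma card_Kab_V: "card (Kab_V a b) = a + b"
  using card_isl_partition[of "Kab_V a b"] by (simp add: Kab_V_isl Kab_V_not_isl card_Kab_V_sides)

definition psi_Kab :: "nat \<Rightarrow> nat \<Rightarrow> nat \<Rightarrow> nat" where
  "psi_Kab a b k =
     (if k = 1 then a + b else if k \<le> 2 * min a b + 1 then min a b - k div 2 + 1 else 0)"

lemma psi_Kab_le_card_kpvc:
  assumes "0 < k" "k \<le> a + b" "is_kpvc (Kab_V a b) Kab_E k S"
  shows "psi_Kab a b k \<le> card S"
proof -
  define l r where "l = card {x \<in> Kab_V a b - S. isl x}"
    and "r = card {x \<in> Kab_V a b - S. \<not> isl x}"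
  have S: "S \<subseteq> Kab_V a b" "max_path_Kab (Kab_V a b - S) < k"
    using assms is_kpvc_Kab_E_iff[of "Kab_V a b" k S] by simp_all
  have lr: "card (Kab_V a b - S) = l + r"
    unfolding l_def r_def by (rule card_isl_partition) simp
  have "card S + l + r = a + b"
    using card_Diff_subset[OF finite_subset[OF S(1) finite_Kab_V] S(1)]
      card_mono[OF finite_Kab_V S(1)] card_Kab_V[of a b] lr
    by linarith
  moreover have "l \<le> card {x \<in> Kab_V a b. isl x}" "r \<le> card {x \<in> Kab_V a b. \<not> isl x}"
    unfolding l_def r_def by (intro card_mono; auto)+
  then have "l \<le> a" "r \<le> b"
    by (simp_all add: Kab_V_isl Kab_V_not_isl card_Kab_V_sides)
  moreover have "min (l + r) (2 * min l r + 1) < k"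
    using S(2) lr by (simp add: max_path_Kab_def l_def r_def)
  ultimately show ?thesis
    using assms(1,2) by (auto simp: psi_Kab_def min_def split: if_splits)
qed

lemma exists_Kab_kpvc_card_psi_Kab:
  assumes "0 < k"
  shows "\<exists>S. is_kpvc (Kab_V a b) Kab_E k S \<and> card S = psi_Kab a b k"
proof -
  consider "k = 1" | "2 \<le> k" "k \<le> 2 * min a b + 1" | "2 * min a b + 1 < k"
    using assms by linarith
  then show ?thesis
  proof cases
    case 1
    have "is_kpvc (Kab_V a b) Kab_E k (Kab_V a b)"
      using 1 by (simp add: is_kpvc_Kab_E_iff max_path_Kab_def)
    then show ?thesis
      using 1 card_Kab_V by (auto simp: psi_Kab_def)
  next
    case 2
    define A where "A = (if a \<le> b then {x \<in> Kab_V a b. isl x} else {x \<in> Kab_V a b. \<not> isl x})"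
    have A: "A = {x \<in> Kab_V a b. isl x} \<or> A = {x \<in> Kab_V a b. \<not> isl x}" "card A = min a b"
      by (simp_all add: A_def Kab_V_isl Kab_V_not_isl card_Kab_V_sides)
    have "min a b - k div 2 + 1 \<le> card A"
      using 2 A(2) by linarith
    then obtain S where S: "S \<subseteq> A" "card S = min a b - k div 2 + 1"
      using obtain_subset_with_card_n by metis
    have "max_path_Kab (Kab_V a b - S) < k"
      using max_path_Kab_Diff_side_le[OF finite_Kab_V S(1) A(1)] A(2) S(2) 2 by linarith
    moreover have "S \<subseteq> Kab_V a b"
      using S(1) A(1) by blast
    ultimately have "is_kpvc (Kab_V a b) Kab_E k S"
      using assms by (simp add: is_kpvc_Kab_E_iff)
    then show ?thesis
      using 2 S(2) by (auto simp: psi_Kab_def)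
  next
    case 3
    have "max_path_Kab (Kab_V a b - {}) < k"
      using 3 by (simp add: max_path_Kab_def Kab_V_isl Kab_V_not_isl card_Kab_V_sides)
    then have "is_kpvc (Kab_V a b) Kab_E k {}"
      using assms by (simp add: is_kpvc_Kab_E_iff)
    then show ?thesis
      using 3 by (auto simp: psi_Kab_def)
  qed
qed

theorem mainTheorem1:
  fixes a b k :: nat
  assumes "0 < a" and "0 < b" and "1 \<le> k" and "k \<le> a + b"
  shows "psi (Kab_V a b) Kab_E k =
          (if k = 1 then a + b
           else if k \<le> 2 * min a b + 1 then min a b - k div 2 + 1
           else 0)"
proof -
  have "0 < k"
    using assms(3) by simp
  then obtain S\<^sub>0 where "is_kpvc (Kab_V a b) Kab_E k S\<^sub>0" "card S\<^sub>0 = psi_Kab a b k"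
    using exists_Kab_kpvc_card_psi_Kab by blast
  then have "psi (Kab_V a b) Kab_E k = psi_Kab a b k"
    using psi_Kab_le_card_kpvc[OF \<open>0 < k\<close> assms(4)] by (metis psi_eqI finite_Kab_V)
  then show ?thesis
    by (simp add: psi_Kab_def)
qed

end
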